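(* Consider the sensor-network Kalman filtering model of the context, with the network state process $\{\Xi(k)\}$ a time-homogeneous Markov chain with transition probabilities $p_{ij}$. Let $V_k=\operatorname{tr}P(k\mid k-1)$ and $Z(k)=(P(k\mid k-1),\Xi(k-1))$. Then $V_k\in\mathbb{R}_{\ge0}$ for all $k\in\mathbb{N}_0$, and there exists $W\in\mathbb{R}_{\ge0}$ such that for all $k\in\mathbb{N}_0$, $$\mathbf{E}\{V_{k+1}\mid Z(k)=(P,i)\}\le W+\nu_i\big(\|A(k)\|^2\operatorname{tr}P+\operatorname{tr}Q(k)\big),$$ where $\nu_i=\sum_{j\in\mathbb{B}}p_{ij}\Pr\{r(k)=0\mid\Xi(k)=j\}$.
   Context: System: $x(k+1)=A(k)x(k)+w(k)$, $k\in\mathbb{N}_0$, $x(k)\in\mathbb{R}^n$, $x(0)\sim\mathcal N(x_0,P_0)$, $w(k)\sim\mathcal N(0,Q(k))$ independent. Sensors $S_1,\dots,S_M$: $y_m(k)=C_mx(k)+v_m(k)$, $v_m(k)\sim\mathcal N(0,R_m(k))$ independent; $x(0),w,v_m$ mutually independent; $\{A(k)\},\{Q(k)\},\{R_m(k)\}$ deterministic and bounded. $\|\cdot\|$ is the spectral norm. Network: directed tree with root (gateway) $S_0$; each $S_m$ has one outgoing edge $\mathcal E_m=(S_m,\mathrm{parent}(S_m))$ and a unique path to $S_0$ with edge set $\mathrm{edge}(\mathrm{path}(S_m))$. Network state $\Xi(k)\in\mathbb{B}=\{1,\dots,|\mathbb{B}|\}$, defined for $k\ge-1$; channel gains $h_m(k)\ge0$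 with time-homogeneous conditional distributions given the network state and conditionally independent across links and times given the network states. Link successes $\gamma_m(k)\in\{0,1\}$ with $\Pr\{\gamma_m(k)=1\mid h_m(k)=h,u_m(k)=u,b_m(k)=b\}=f_m(hu,b)$, where (standing assumption) the power and bit-rate laws are $u_m(k)=\kappa_m(\Xi(k),h_1(k),\dots,h_M(k))$, $b_m(k)=\eta_m(\Xi(k),h_1(k),\dots,h_M(k))$. Conditioned on the network states, the $\gamma_m(k)$ are independent across $m$ and $k$ with $\Pr\{\gamma_m(k)=1\mid\Xi(k)=j\}$ independent of $k$; network and dropout processes are independent of $x(0),w,v_m$. Estimator: $\theta_m(k)=\prod_{\mathcal E_i\in\mathrm{edge}(\mathrm{path}(S_m))}\gamma_i(k)$, $C(k)=[\theta_1(k)C_1;\dots;\theta_M(k)C_M]$, $y(k)=[\theta_1(k)y_1(k);\dots;\theta_M(k)y_M(k)]$, $R(k)=\mathrm{diag}(R_1(k),\dots,R_M(k))$; Kalman filter $\hat x(k+1|k)=A(k)\hat x(k|k-1)+K(k)(y(k)-C(k)\hat x(k|k-1))$, $P(k+1|k)=A(k)P(k|k-1)A(k)^T+Q(k)-K(k)C(k)P(k|k-1)A(k)^T$, $K(k)=A(k)P(k|k-1)C(k)^T(C(k)P(k|k-1)C(k)^T+R(k))^{-1}$, $P(0|-1)=P_0$, $\hat x(0|-1)=x_0$. $r(k)=1$ if $C(k)$ has full column rank, $0$ otherwise. *)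

theory Defs
  imports "HOL-Analysis.Analysis"
begin

definition specnorm :: "real^'n^'m \<Rightarrow> real" where
  "specnorm A = onorm (\<lambda>x. A *v x)"

definition psd :: "real^'n^'n \<Rightarrow> bool" where
  "psd P \<longleftrightarrow> transpose P = P \<and> (\<forall>x. 0 \<le> x \<bullet> (P *v x))"

definition pd :: "real^'n^'n \<Rightarrow> bool" where
  "pd P \<longleftrightarrow> transpose P = P \<and> (\<forall>x. x \<noteq> 0 \<longrightarrow> 0 < x \<bullet> (P *v x))"

text \<open>Tree network: parent m = None means the outgoing edge of S_m goes to the gateway S_0.
  The edge set of the path from S_m to S_0 is identified with the set of sensors i whose
  outgoing edge E_i lies on that path, i.e. m and all its ancestors.\<close>
definition parent_rel :: "('m \<Rightarrow> 'm option) \<Rightarrow> ('m \<times> 'm) set" where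
  "parent_rel parent = {(a, b). parent a = Some b}"

definition path_edges :: "('m \<Rightarrow> 'm option) \<Rightarrow> 'm \<Rightarrow> 'm set" where
  "path_edges parent m = {i. (m, i) \<in> (parent_rel parent)\<^sup>*}"

text \<open>theta_m for a realisation g of the link successes (g i = True iff gamma_i(k) = 1).\<close>
definition theta :: "('m \<Rightarrow> 'm option) \<Rightarrow> ('m \<Rightarrow> bool) \<Rightarrow> 'm \<Rightarrow> real" where
  "theta parent g m = (\<Prod>i\<in>path_edges parent m. if g i then 1 else 0)"

text \<open>Stacked measurement matrix C(k): output coordinate a belongs to sensor (sensor a),
  Cfull stacks C_1,...,C_M.\<close>
definition Cmat :: "('p \<Rightarrow> 'm) \<Rightarrow> real^'n^'p \<Rightarrow> ('m \<Rightarrow> 'm option) \<Rightarrow> ('m \<Rightarrow> bool) \<Rightarrow> real^'n^'p" where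
  "Cmat sensor Cfull parent g = (\<chi> a. theta parent g (sensor a) *\<^sub>R (Cfull $ a))"

definition riccati :: "real^'n^'n \<Rightarrow> real^'n^'n \<Rightarrow> real^'n^'p \<Rightarrow> real^'p^'p \<Rightarrow> real^'n^'n \<Rightarrow> real^'n^'n" where
  "riccati A Q C R P =
     (let K = A ** P ** transpose C ** matrix_inv (C ** P ** transpose C + R)
      in A ** P ** transpose A + Q - K ** C ** P ** transpose A)"

text \<open>Conditional probability of the link-success pattern g given network state j:
  links conditionally independent, q m j = Pr{gamma_m(k)=1 | Xi(k)=j}.\<close>
definition pattern_prob :: "('m::finite \<Rightarrow> 'b \<Rightarrow> real) \<Rightarrow> 'b \<Rightarrow> ('m \<Rightarrow> bool) \<Rightarrow> real" where
  "pattern_prob q j g = (\<Prod>m\<in>UNIV. if g m then q m j else 1 - q m j)"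

text \<open>r(k) = 1 iff C(k) has full column rank.\<close>
definition full_col_rank :: "real^'n^'p \<Rightarrow> bool" where
  "full_col_rank C \<longleftrightarrow> rank C = CARD('n)"

definition prob_r0 :: "('p \<Rightarrow> 'm::finite) \<Rightarrow> real^'n^'p \<Rightarrow> ('m \<Rightarrow> 'm option) \<Rightarrow> ('m \<Rightarrow> 'b \<Rightarrow> real) \<Rightarrow> 'b \<Rightarrow> real" where
  "prob_r0 sensor Cfull parent q j =
     (\<Sum>g\<in>{g. \<not> full_col_rank (Cmat sensor Cfull parent g)}. pattern_prob q j g)"

text \<open>E{V_{k+1} | Z(k) = (P,i)} = sum_j p_ij sum_g Pr{gamma(k)=g | Xi(k)=j} tr P(k+1|k).\<close>
definition cond_exp_V :: "(nat \<Rightarrow> real^'n^'n) \<Rightarrow> (nat \<Rightarrow> real^'n^'n) \<Rightarrow> (nat \<Rightarrow> real^'p^'p)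
    \<Rightarrow> ('p \<Rightarrow> 'm::finite) \<Rightarrow> real^'n^'p \<Rightarrow> ('m \<Rightarrow> 'm option) \<Rightarrow> ('b::finite \<Rightarrow> 'b \<Rightarrow> real)
    \<Rightarrow> ('m \<Rightarrow> 'b \<Rightarrow> real) \<Rightarrow> nat \<Rightarrow> real^'n^'n \<Rightarrow> 'b \<Rightarrow> real" where
  "cond_exp_V A Q R sensor Cfull parent p q k P i =
     (\<Sum>j\<in>UNIV. p i j * (\<Sum>g\<in>UNIV. pattern_prob q j g *
        trace (riccati (A k) (Q k) (Cmat sensor Cfull parent g) (R k) P)))"

text \<open>Pathwise prediction covariance P(k|k-1) for a realisation G of the link successes.\<close>
fun Ptraj :: "(nat \<Rightarrow> real^'n^'n) \<Rightarrow> (nat \<Rightarrow> real^'n^'n) \<Rightarrow> (nat \<Rightarrow> real^'p^'p)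
    \<Rightarrow> ('p \<Rightarrow> 'm) \<Rightarrow> real^'n^'p \<Rightarrow> ('m \<Rightarrow> 'm option) \<Rightarrow> real^'n^'n
    \<Rightarrow> (nat \<Rightarrow> 'm \<Rightarrow> bool) \<Rightarrow> nat \<Rightarrow> real^'n^'n" where
  "Ptraj A Q R sensor Cfull parent P0 G 0 = P0"
| "Ptraj A Q R sensor Cfull parent P0 G (Suc k) =
     riccati (A k) (Q k) (Cmat sensor Cfull parent (G k)) (R k) (Ptraj A Q R sensor Cfull parent P0 G k)"

end

theory Submission
  imports Defs
begin

text \<open>Write P(k+1|k) = A M A^T + Q with M = P(k|k) the posterior covariance. Completing the
  square in the innovation shows that x^T M x is the minimum over w of
  (x - C^T w)^T P (x - C^T w) + w^T R w. The choice w = 0 gives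
  tr P(k+1|k) \<le> \<parallel>A\<parallel>^2 tr P + tr Q for every pattern of link successes; if C has a left
  inverse L, the choice w = L^T x eliminates P and bounds tr P(k+1|k) by a constant depending
  only on \<parallel>R\<parallel>, \<parallel>L\<parallel>, \<parallel>A\<parallel> and \<parallel>Q\<parallel>. Averaging over the finitely many patterns, the
  full-rank ones contribute a constant W and the others at most Pr{r(k) = 0 | \<Xi>(k) = j}
  times the first bound; averaging over the next network state j yields \<nu>_i.\<close>

lemma transpose_add: "transpose (A + B) = transpose A + transpose (B::'a::semiring_1^'n^'m)"
  by (simp add: transpose_def vec_eq_iff)

lemma transpose_diff: "transpose (A - B) = transpose A - transpose (B::'a::ring_1^'n^'m)"
  by (simp add: transpose_def vec_eq_iff)

lemma matrix_diff_ldistrib: "(A::real^'n^'m) ** (B - C) = A ** B - A ** C"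
  by (simp add: matrix_eq matrix_vector_mul_assoc[symmetric] matrix_vector_mult_diff_rdistrib
      matrix_vector_mult_diff_distrib)

lemma matrix_diff_rdistrib: "((B::real^'n^'m) - C) ** A = B ** A - C ** A"
  by (simp add: matrix_eq matrix_vector_mul_assoc[symmetric] matrix_vector_mult_diff_rdistrib)

lemma inner_matrix_vector_transpose: "x \<bullet> ((A::real^'n^'m) *v y) = (transpose A *v x) \<bullet> y"
  by (simp add: dot_lmul_matrix)

lemma inner_matrix_vector_symmetric:
  "transpose (P::real^'n^'n) = P \<Longrightarrow> x \<bullet> (P *v y) = (P *v x) \<bullet> y"
  by (metis inner_matrix_vector_transpose)

lemma inner_congruence:
  "x \<bullet> ((A ** M ** transpose A) *v x) = (transpose A *v x) \<bullet> ((M::real^'n^'n) *v (transpose A *v x))"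
  by (simp add: matrix_vector_mul_assoc[symmetric] inner_matrix_vector_transpose del: transpose_matrix_vector)

lemma psd_nonneg: "psd P \<Longrightarrow> 0 \<le> x \<bullet> (P *v x)"
  by (simp add: psd_def)

lemma pd_imp_psd: "pd P \<Longrightarrow> psd P"
  unfolding pd_def psd_def by (metis inner_zero_left order.refl order_less_imp_le)

lemma psd_mat_1: "psd (mat 1)"
  by (simp add: psd_def)

lemma psd_add: "psd P \<Longrightarrow> psd Q \<Longrightarrow> psd (P + Q)"
  by (simp add: psd_def transpose_add matrix_vector_mult_add_rdistrib inner_add_right)

lemma pd_psd_add: "psd P \<Longrightarrow> pd R \<Longrightarrow> pd (P + R)"
  by (simp add: psd_def pd_def transpose_add matrix_vector_mult_add_rdistrib inner_add_right
      add_nonneg_pos)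

lemma psd_congruence:
  fixes A :: "real^'n^'m"
  assumes "psd M"
  shows "psd (A ** M ** transpose A)"
  using assms unfolding psd_def
  by (simp add: matrix_transpose_mul matrix_mul_assoc inner_congruence)

lemma pd_invertible:
  assumes "pd (S::real^'p^'p)"
  shows "invertible S"
proof -
  have "inj ((*v) S)"
    unfolding vec.inj_iff_eq_0
  proof (intro allI impI)
    fix x assume "S *v x = 0"
    then have "x \<bullet> (S *v x) = 0" by simp
    then show "x = 0" using assms unfolding pd_def by force
  qed
  then show ?thesis
    using matrix_left_invertible_injective invertible_left_inverse by blast
qed

lemma matrix_inv_right: "invertible A \<Longrightarrow> A ** matrix_inv A = mat 1"
  unfolding invertible_def matrix_inv_def by (rule someI2_ex) auto

lemma transpose_matrix_inv_symmetric:
  assumes "invertible (S::real^'n^'n)" "transpose S = S"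
  shows "transpose (matrix_inv S) = matrix_inv S"
proof -
  have left: "transpose (matrix_inv S) ** S = mat 1"
    using matrix_inv_right[OF assms(1)] by (metis assms(2) matrix_transpose_mul transpose_mat)
  have "transpose (matrix_inv S) = transpose (matrix_inv S) ** (S ** matrix_inv S)"
    by (simp add: matrix_inv_right[OF assms(1)])
  also have "\<dots> = matrix_inv S"
    by (simp add: matrix_mul_assoc left)
  finally show ?thesis .
qed

definition posterior_cov :: "real^'n^'n \<Rightarrow> real^'n^'p \<Rightarrow> real^'p^'p \<Rightarrow> real^'n^'n" where
  "posterior_cov P C R = P - P ** transpose C ** matrix_inv (C ** P ** transpose C + R) ** C ** P"

lemma riccati_posterior_cov:
  "riccati A Q C R P = A ** posterior_cov P C R ** transpose A + Q"
  unfolding riccati_def posterior_cov_def Let_def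
  by (simp add: matrix_diff_ldistrib matrix_diff_rdistrib matrix_mul_assoc)

lemma posterior_cov_completing_square:
  fixes P :: "real^'n^'n" and C :: "real^'n^'p" and R :: "real^'p^'p" and x :: "real^'n"
  assumes "psd P" "pd R"
  defines "S \<equiv> C ** P ** transpose C + R"
  defines "y \<equiv> matrix_inv S *v (C *v (P *v x))"
  shows "(x - transpose C *v w) \<bullet> (P *v (x - transpose C *v w)) + w \<bullet> (R *v w)
    = x \<bullet> (posterior_cov P C R *v x) + (w - y) \<bullet> (S *v (w - y))"
proof -
  have tP: "transpose P = P" using assms(1) by (simp add: psd_def)
  have pdS: "pd S"
    unfolding S_def by (intro pd_psd_add psd_congruence assms)
  then have tS: "transpose S = S" by (simp add: pd_def)
  have Sy: "S *v y = C *v (P *v x)"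
    unfolding y_def
    by (metis matrix_inv_right[OF pd_invertible[OF pdS]] matrix_vector_mul_assoc matrix_vector_mul_lid)
  have cross: "x \<bullet> (P *v (transpose C *v v)) = (S *v y) \<bullet> v" for v
  proof -
    have "x \<bullet> (P *v (transpose C *v v)) = (P *v x) \<bullet> (transpose C *v v)"
      by (rule inner_matrix_vector_symmetric[OF tP])
    also have "\<dots> = (C *v (P *v x)) \<bullet> v"
      by (metis inner_matrix_vector_transpose transpose_transpose)
    finally show ?thesis by (simp only: Sy)
  qed
  have posterior: "x \<bullet> (posterior_cov P C R *v x) = x \<bullet> (P *v x) - (S *v y) \<bullet> y"
  proof -
    have "posterior_cov P C R *v x = P *v x - P *v (transpose C *v y)"
      unfolding posterior_cov_def y_def S_def
      by (simp add: matrix_vector_mult_diff_rdistrib matrix_vector_mul_assoc matrix_mul_assoc)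
    then show ?thesis
      using cross[of y] by (simp add: inner_diff_right del: transpose_matrix_vector)
  qed
  have noise: "w \<bullet> (S *v w) = (transpose C *v w) \<bullet> (P *v (transpose C *v w)) + w \<bullet> (R *v w)"
    unfolding S_def by (simp add: matrix_vector_mult_add_rdistrib inner_add_right inner_congruence)
  have "(w - y) \<bullet> (S *v (w - y)) = w \<bullet> (S *v w) - 2 * ((S *v y) \<bullet> w) + (S *v y) \<bullet> y"
    using inner_matrix_vector_symmetric[OF tS, of y w] inner_matrix_vector_symmetric[OF tS, of y y]
    by (simp add: matrix_vector_mult_diff_distrib inner_diff_left inner_diff_right inner_commute)
  moreover have "(transpose C *v w) \<bullet> (P *v x) = (S *v y) \<bullet> w"
    using cross[of w] inner_matrix_vector_symmetric[OF tP, of x] by (simp only: inner_commute)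
  ultimately show ?thesis
    using cross[of w] posterior noise
    by (simp add: matrix_vector_mult_diff_distrib inner_diff_left inner_diff_right
        del: transpose_matrix_vector)
qed

lemma posterior_cov_quadratic_le:
  fixes P :: "real^'n^'n" and C :: "real^'n^'p" and R :: "real^'p^'p"
  assumes "psd P" "pd R"
  shows "x \<bullet> (posterior_cov P C R *v x)
    \<le> (x - transpose C *v w) \<bullet> (P *v (x - transpose C *v w)) + w \<bullet> (R *v w)"
  using posterior_cov_completing_square[OF assms, where x = x and w = w]
    psd_nonneg[OF pd_imp_psd[OF pd_psd_add[OF psd_congruence[OF assms(1)] assms(2)]]]
  by (metis le_add_same_cancel1)

lemma psd_posterior_cov:
  fixes P :: "real^'n^'n" and C :: "real^'n^'p" and R :: "real^'p^'p"
  assumes "psd P" "pd R"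
  shows "psd (posterior_cov P C R)"
proof -
  define S where "S = C ** P ** transpose C + R"
  have pdS: "pd S"
    unfolding S_def by (intro pd_psd_add psd_congruence assms)
  have tP: "transpose P = P" using assms(1) by (simp add: psd_def)
  have "transpose (matrix_inv S) = matrix_inv S"
    using pdS by (simp add: transpose_matrix_inv_symmetric pd_invertible pd_def)
  then have "transpose (posterior_cov P C R) = posterior_cov P C R"
    unfolding posterior_cov_def S_def[symmetric]
    by (simp add: transpose_diff matrix_transpose_mul tP matrix_mul_assoc)
  moreover have "0 \<le> x \<bullet> (posterior_cov P C R *v x)" for x
  proof -
    define y where "y = matrix_inv S *v (C *v (P *v x))"
    have "0 \<le> (x - transpose C *v y) \<bullet> (P *v (x - transpose C *v y)) + y \<bullet> (R *v y)"
      using assms by (simp add: psd_nonneg pd_imp_psd del: transpose_matrix_vector)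
    then show ?thesis
      using posterior_cov_completing_square[OF assms, where x = x and w = y] unfolding S_def y_def by simp
  qed
  ultimately show ?thesis by (simp add: psd_def)
qed

lemma psd_riccati:
  assumes "psd P" "pd R" "psd Q"
  shows "psd (riccati A Q C R P)"
  unfolding riccati_posterior_cov
  by (intro psd_add psd_congruence psd_posterior_cov assms)

lemma inner_matrix_vector_sum:
  "x \<bullet> ((P::real^'n^'m) *v y) = (\<Sum>a\<in>UNIV. \<Sum>b\<in>UNIV. x$a * P$a$b * y$b)"
  by (simp add: inner_vec_def matrix_vector_mult_def sum_distrib_left mult.assoc)

lemma inner_axis_matrix_axis: "axis i t \<bullet> ((P::real^'n^'m) *v axis j s) = t * s * P$i$j"
  by (simp add: inner_axis' matrix_vector_mul_component inner_axis)

lemma psd_symmetric_entry: "psd P \<Longrightarrow> P$a$b = P$b$a"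
  unfolding psd_def by (metis transpose_def vec_lambda_beta)

lemma psd_diag_nonneg: "psd P \<Longrightarrow> 0 \<le> P$i$i"
  using psd_nonneg[of P "axis i 1"] by (simp add: inner_axis_matrix_axis)

lemma psd_diag_eq_0_row:
  assumes "psd P" "P$i$i = 0"
  shows "P$i$j = 0"
proof (rule ccontr)
  assume ne: "P$i$j \<noteq> 0"
  define t where "t = - (P$j$j + 1) / (2 * P$i$j)"
  define v where "v = axis i t + axis j 1"
  have "v \<bullet> (P *v v) = t * t * P$i$i + t * P$i$j + t * P$j$i + P$j$j"
    unfolding v_def
    by (simp add: matrix_vector_right_distrib inner_add_left inner_add_right inner_axis_matrix_axis)
  also have "\<dots> = -1"
    using assms psd_symmetric_entry[OF assms(1), of j i] ne by (simp add: t_def field_simps)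
  finally show False using psd_nonneg[OF assms(1), of v] by simp
qed

text \<open>One step of symmetric Gaussian elimination: subtracting the rank-one part of pivot i
  leaves a positive semidefinite matrix with a smaller set of nonzero diagonal entries.\<close>
lemma psd_pivot_step:
  fixes P :: "real^'n^'n"
  assumes "psd P" "0 < P$i$i"
  defines "P' \<equiv> \<chi> a b. P$a$b - P$i$a * P$i$b / P$i$i"
  shows "x \<bullet> (P *v x) = x \<bullet> (P' *v x) + ((P *v x)$i)\<^sup>2 / P$i$i"
    and "psd P'"
    and "{j. P'$j$j \<noteq> 0} \<subset> {j. P$j$j \<noteq> 0}"
proof -
  let ?d = "P$i$i"
  have quadratic: "x \<bullet> (P *v x) = x \<bullet> (P' *v x) + ((P *v x)$i)\<^sup>2 / ?d" for x
  proof -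
    have "x \<bullet> (P' *v x) = (\<Sum>a\<in>UNIV. \<Sum>b\<in>UNIV. x$a * P$a$b * x$b)
        - (\<Sum>a\<in>UNIV. \<Sum>b\<in>UNIV. (P$i$a * x$a) * (P$i$b * x$b)) / ?d"
      unfolding inner_matrix_vector_sum P'_def
      by (simp add: sum_subtractf sum_divide_distrib algebra_simps)
    also have "(\<Sum>a\<in>UNIV. \<Sum>b\<in>UNIV. (P$i$a * x$a) * (P$i$b * x$b)) = ((P *v x)$i)\<^sup>2"
      by (simp add: matrix_vector_mult_def power2_eq_square sum_product)
    finally show ?thesis by (simp add: inner_matrix_vector_sum)
  qed
  then show "x \<bullet> (P *v x) = x \<bullet> (P' *v x) + ((P *v x)$i)\<^sup>2 / ?d" .
  have "transpose P' = P'"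
    by (simp add: P'_def transpose_def vec_eq_iff) (metis psd_symmetric_entry[OF assms(1)] mult.commute)
  moreover have "0 \<le> x \<bullet> (P' *v x)" for x
  proof -
    define s where "s = (P *v x)$i"
    define t where "t = - s / ?d"
    have tP: "transpose P = P" using assms(1) by (simp add: psd_def)
    have "x \<bullet> (P *v axis i t) = t * s"
      using inner_matrix_vector_symmetric[OF tP, of x "axis i t"] by (simp add: inner_axis s_def)
    moreover have "axis i t \<bullet> (P *v x) = t * s" by (simp add: inner_axis' s_def)
    moreover have "axis i t \<bullet> (P *v axis i t) = t * t * ?d" by (rule inner_axis_matrix_axis)
    ultimately have "(x + axis i t) \<bullet> (P *v (x + axis i t)) = x \<bullet> (P *v x) + (2 * t * s + t * t * ?d)"
      by (simp only: matrix_vector_right_distrib inner_add_left inner_add_right)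
    also have "2 * t * s + t * t * ?d = - s\<^sup>2 / ?d"
      using assms(2) by (simp add: t_def field_simps power2_eq_square)
    also have "x \<bullet> (P *v x) + - s\<^sup>2 / ?d = x \<bullet> (P' *v x)"
      using quadratic[of x] by (simp add: s_def)
    finally show ?thesis using psd_nonneg[OF assms(1), of "x + axis i t"] by simp
  qed
  ultimately show "psd P'" by (simp add: psd_def)
  have "P'$i$i = 0" using assms(2) by (simp add: P'_def power2_eq_square)
  moreover have "P'$j$j = 0" if "P$j$j = 0" for j
  proof -
    have "P$i$j = 0"
      using psd_diag_eq_0_row[OF assms(1) that, of i] psd_symmetric_entry[OF assms(1), of i j] by simp
    then show ?thesis using that by (simp add: P'_def)
  qed
  moreover have "P$i$i \<noteq> 0" using assms(2) by simp
  ultimately show "{j. P'$j$j \<noteq> 0} \<subset> {j. P$j$j \<noteq> 0}"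
    by blast
qed

lemma psd_sum_of_squares:
  fixes P :: "real^'n^'n"
  assumes "psd P"
  shows "\<exists>U (N::nat). \<forall>x. x \<bullet> (P *v x) = (\<Sum>k<N. (U k \<bullet> x)\<^sup>2)"
  using assms
proof (induction "card {i. P$i$i \<noteq> 0}" arbitrary: P rule: less_induct)
  case less
  show ?case
  proof (cases "\<exists>i. P$i$i \<noteq> 0")
    case False
    then have "P$a$b = 0" for a b using psd_diag_eq_0_row[OF less.prems] by blast
    then have "x \<bullet> (P *v x) = 0" for x by (simp add: inner_matrix_vector_sum)
    then show ?thesis by (intro exI[of _ "\<lambda>k. 0"] exI[of _ 0]) simp
  next
    case True
    then obtain i where "P$i$i \<noteq> 0" by blast
    with psd_diag_nonneg[OF less.prems, of i] have pivot: "0 < P$i$i" by simp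
    note step = psd_pivot_step[OF less.prems pivot]
    obtain U and N :: nat where UN: "\<forall>x. x \<bullet> ((\<chi> a b. P$a$b - P$i$a * P$i$b / P$i$i) *v x) = (\<Sum>k<N. (U k \<bullet> x)\<^sup>2)"
      using less.hyps[OF psubset_card_mono[OF finite step(3)] step(2)] by blast
    define u where "u = (1 / sqrt (P$i$i)) *\<^sub>R P$i"
    have "(u \<bullet> x)\<^sup>2 = ((P *v x)$i)\<^sup>2 / P$i$i" for x
      using pivot by (simp add: u_def matrix_vector_mul_component power_mult_distrib power_divide)
    then have "x \<bullet> (P *v x) = (\<Sum>k<Suc N. ((U(N := u)) k \<bullet> x)\<^sup>2)" for x
      using step(1)[of x] UN by simp
    then show ?thesis by blast
  qed
qed

lemma power2_norm_vec: "(norm (v::real^'n))\<^sup>2 = (\<Sum>i\<in>UNIV. (v$i)\<^sup>2)"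
  unfolding norm_vec_def L2_set_def by (simp add: sum_nonneg)

lemma specnorm_nonneg: "0 \<le> specnorm (A::real^'n^'m)"
  unfolding specnorm_def by (rule onorm_pos_le[OF matrix_vector_mul_bounded_linear])

lemma norm_matrix_vector_le: "norm ((A::real^'n^'m) *v x) \<le> specnorm A * norm x"
  unfolding specnorm_def by (rule onorm[OF matrix_vector_mul_bounded_linear])

lemma inner_matrix_vector_le: "x \<bullet> ((R::real^'p^'p) *v x) \<le> specnorm R * (norm x)\<^sup>2"
proof -
  have "x \<bullet> (R *v x) \<le> norm x * norm (R *v x)" by (rule norm_cauchy_schwarz)
  also have "\<dots> \<le> norm x * (specnorm R * norm x)"
    by (rule mult_left_mono[OF norm_matrix_vector_le]) simp
  finally show ?thesis by (simp add: power2_eq_square algebra_simps)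
qed

lemma trace_congruence: "trace (A ** M ** transpose A) = (\<Sum>i\<in>UNIV. A$i \<bullet> ((M::real^'n^'n) *v A$i))"
  unfolding trace_def
  by (simp add: matrix_matrix_mult_def transpose_def inner_matrix_vector_sum sum_distrib_right
      mult.assoc) (rule sum.cong[OF refl], rule sum.swap)

lemma trace_psd_nonneg: "psd P \<Longrightarrow> 0 \<le> trace P"
  unfolding trace_def by (intro sum_nonneg psd_diag_nonneg)

lemma trace_le_specnorm: "trace (Q::real^'n^'n) \<le> real CARD('n) * specnorm Q"
proof -
  have "Q$i$i \<le> specnorm Q" for i
    using matrix_component_le_onorm[of Q i i] unfolding specnorm_def by simp
  then show ?thesis
    unfolding trace_def using sum_bounded_above[of UNIV "\<lambda>i. Q$i$i" "specnorm Q"] by simp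
qed

text \<open>With P written as a sum of rank-one terms u u^T, this is the bound
  norm (A *v u) \<le> specnorm A * norm u summed over the terms.\<close>
lemma trace_congruence_le:
  fixes A :: "real^'n^'m" and P :: "real^'n^'n"
  assumes "psd P"
  shows "trace (A ** P ** transpose A) \<le> (specnorm A)\<^sup>2 * trace P"
proof -
  obtain U and N :: nat where UN: "\<forall>x. x \<bullet> (P *v x) = (\<Sum>k<N. (U k \<bullet> x)\<^sup>2)"
    using psd_sum_of_squares[OF assms] by blast
  have trace_P: "trace P = (\<Sum>k<N. (norm (U k))\<^sup>2)"
  proof -
    have "P$i$i = (\<Sum>k<N. (U k $ i)\<^sup>2)" for i
      using UN[rule_format, of "axis i 1"] by (simp add: inner_axis_matrix_axis inner_axis)
    then show ?thesis
      unfolding trace_def power2_norm_vec by (simp add: sum.swap[of _ _ UNIV])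
  qed
  have "trace (A ** P ** transpose A) = (\<Sum>k<N. (norm (A *v U k))\<^sup>2)"
    unfolding trace_congruence UN[rule_format]
    by (simp add: power2_norm_vec matrix_vector_mul_component inner_commute sum.swap[of _ UNIV])
  also have "\<dots> \<le> (\<Sum>k<N. (specnorm A)\<^sup>2 * (norm (U k))\<^sup>2)"
    by (intro sum_mono) (metis norm_matrix_vector_le norm_ge_zero power_mono power_mult_distrib)
  also have "\<dots> = (specnorm A)\<^sup>2 * trace P"
    by (simp add: trace_P sum_distrib_left)
  finally show ?thesis .
qed

lemma trace_riccati_le:
  assumes "psd P" "pd R"
  shows "trace (riccati A Q C R P) \<le> (specnorm A)\<^sup>2 * trace P + trace Q"
proof -
  have "trace (A ** posterior_cov P C R ** transpose A) \<le> trace (A ** P ** transpose A)"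
    unfolding trace_congruence
    by (intro sum_mono) (use posterior_cov_quadratic_le[OF assms, where w = 0] in simp)
  also have "\<dots> \<le> (specnorm A)\<^sup>2 * trace P"
    by (rule trace_congruence_le[OF assms(1)])
  finally show ?thesis by (simp add: riccati_posterior_cov trace_add)
qed

lemma trace_riccati_le_left_inverse:
  fixes P :: "real^'n^'n" and C :: "real^'n^'p" and L :: "real^'p^'n"
  assumes "psd P" "pd R" "L ** C = mat 1"
    and "specnorm A \<le> a" "specnorm R \<le> r" "specnorm Q \<le> q"
  shows "trace (riccati A Q C R P)
    \<le> r * (specnorm (transpose L))\<^sup>2 * (real CARD('n) * a\<^sup>2) + real CARD('n) * q"
proof -
  let ?s = "(specnorm (transpose L))\<^sup>2"
  have r: "0 \<le> r" using assms(5) specnorm_nonneg[of R] by linarith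
  have row: "A$i \<bullet> (posterior_cov P C R *v A$i) \<le> r * ?s * (norm (A$i))\<^sup>2" for i
  proof -
    define w where "w = transpose L *v A$i"
    have "transpose C *v w = A$i"
      unfolding w_def
      by (simp add: matrix_vector_mul_assoc assms(3) flip: matrix_transpose_mul del: transpose_matrix_vector)
    then have "A$i \<bullet> (posterior_cov P C R *v A$i) \<le> w \<bullet> (R *v w)"
      using posterior_cov_quadratic_le[OF assms(1,2), where C = C and x = "A$i" and w = w] by simp
    also have "\<dots> \<le> r * (norm w)\<^sup>2"
      using inner_matrix_vector_le[of w R] assms(5) by (meson mult_right_mono order_trans zero_le_power2)
    also have "\<dots> \<le> r * (?s * (norm (A$i))\<^sup>2)"
      unfolding w_def using r
      by (intro mult_left_mono) (metis norm_matrix_vector_le norm_ge_zero power_mono power_mult_distrib)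
    finally show ?thesis by simp
  qed
  have "(\<Sum>i\<in>UNIV. (norm (A$i))\<^sup>2) = trace (A ** mat 1 ** transpose A)"
    using trace_congruence[of A "mat 1"] by (simp add: power2_norm_eq_inner)
  also have "\<dots> \<le> (specnorm A)\<^sup>2 * real CARD('n)"
    using trace_congruence_le[OF psd_mat_1, of A] by (simp add: trace_I)
  also have "\<dots> \<le> a\<^sup>2 * real CARD('n)"
    using assms(4) specnorm_nonneg[of A] by (intro mult_right_mono power_mono) auto
  finally have rows: "(\<Sum>i\<in>UNIV. (norm (A$i))\<^sup>2) \<le> real CARD('n) * a\<^sup>2"
    by (simp only: mult.commute)
  have "trace (A ** posterior_cov P C R ** transpose A) \<le> r * ?s * (\<Sum>i\<in>UNIV. (norm (A$i))\<^sup>2)"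
    unfolding trace_congruence sum_distrib_left by (intro sum_mono row)
  also have "\<dots> \<le> r * ?s * (real CARD('n) * a\<^sup>2)"
    using r by (intro mult_left_mono rows) auto
  finally have "trace (A ** posterior_cov P C R ** transpose A) \<le> r * ?s * (real CARD('n) * a\<^sup>2)" .
  moreover have "trace Q \<le> real CARD('n) * q"
    using trace_le_specnorm[of Q] assms(6) by (smt (verit) mult_left_mono of_nat_0_le_iff)
  ultimately show ?thesis by (simp add: riccati_posterior_cov trace_add)
qed

lemma full_col_rank_left_inverse:
  "full_col_rank (C::real^'n^'p) \<Longrightarrow> \<exists>L::real^'p^'n. L ** C = mat 1"
  unfolding full_col_rank_def full_rank_injective matrix_left_invertible_injective .

lemma pattern_prob_nonneg: "(\<And>m. 0 \<le> q m j \<and> q m j \<le> 1) \<Longrightarrow> 0 \<le> pattern_prob q j g"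
  unfolding pattern_prob_def by (auto intro!: prod_nonneg)

lemma pattern_prob_le_1: "(\<And>m. 0 \<le> q m j \<and> q m j \<le> 1) \<Longrightarrow> pattern_prob q j g \<le> 1"
  unfolding pattern_prob_def by (auto intro!: prod_le_1)

lemma weighted_sum_le_split:
  fixes w T c :: "'g::finite \<Rightarrow> real"
  assumes "\<And>g. 0 \<le> w g" "\<And>g. w g \<le> 1" "\<And>g. 0 \<le> c g"
    and "\<And>g. g \<notin> B \<Longrightarrow> T g \<le> c g" "\<And>g. g \<in> B \<Longrightarrow> T g \<le> X"
  shows "(\<Sum>g\<in>UNIV. w g * T g) \<le> (\<Sum>g\<in>UNIV. c g) + (\<Sum>g\<in>B. w g) * X"
proof -
  have "w g * T g \<le> c g + (if g \<in> B then w g * X else 0)" for g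
  proof (cases "g \<in> B")
    case True
    then show ?thesis using assms(1,3,5) by (simp add: add_increasing mult_left_mono)
  next
    case False
    then have "w g * T g \<le> w g * c g" using assms(1,4) by (simp add: mult_left_mono)
    also have "\<dots> \<le> c g" using assms(1-3) by (simp add: mult_left_le_one_le)
    finally show ?thesis using False by simp
  qed
  then have "(\<Sum>g\<in>UNIV. w g * T g) \<le> (\<Sum>g\<in>UNIV. c g + (if g \<in> B then w g * X else 0))"
    by (rule sum_mono)
  also have "\<dots> = (\<Sum>g\<in>UNIV. c g) + (\<Sum>g\<in>B. w g) * X"
    by (simp add: sum.distrib sum_distrib_right flip: sum.inter_filter)
  finally show ?thesis .
qed

lemma pattern_average_trace_riccati_le:
  fixes A Q :: "nat \<Rightarrow> real^'n^'n" and R :: "nat \<Rightarrow> real^'p^'p"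
    and sensor :: "'p \<Rightarrow> 'm::finite" and Cfull :: "real^'n^'p"
  assumes R_pd: "\<And>k. pd (R k)" and q_prob: "\<And>m j. 0 \<le> q m j \<and> q m j \<le> 1"
    and a: "\<And>k. specnorm (A k) \<le> a" and b: "\<And>k. specnorm (Q k) \<le> b"
    and r: "\<And>k. specnorm (R k) \<le> r"
  shows "\<exists>W\<ge>0. \<forall>k P j. psd P \<longrightarrow>
    (\<Sum>g\<in>UNIV. pattern_prob q j g * trace (riccati (A k) (Q k) (Cmat sensor Cfull parent g) (R k) P))
      \<le> W + prob_r0 sensor Cfull parent q j * ((specnorm (A k))\<^sup>2 * trace P + trace (Q k))"
proof -
  have a0: "0 \<le> a" and b0: "0 \<le> b" and r0: "0 \<le> r"
    using specnorm_nonneg a[of 0] b[of 0] r[of 0] order_trans by blast+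
  let ?C = "Cmat sensor Cfull parent"
  let ?B = "{g. \<not> full_col_rank (?C g)}"
  define L where "L g = (SOME L. L ** ?C g = mat 1)" for g
  have L: "L g ** ?C g = mat 1" if "g \<notin> ?B" for g
    using full_col_rank_left_inverse[of "?C g"] that unfolding L_def by (auto intro: someI_ex)
  define c where "c g = (if g \<in> ?B then 0
    else r * (specnorm (transpose (L g)))\<^sup>2 * (real CARD('n) * a\<^sup>2) + real CARD('n) * b)" for g
  have c_nonneg: "0 \<le> c g" for g
    unfolding c_def using a0 b0 r0 by simp
  have "(\<Sum>g\<in>UNIV. pattern_prob q j g * trace (riccati (A k) (Q k) (?C g) (R k) P))
      \<le> (\<Sum>g\<in>UNIV. c g) + prob_r0 sensor Cfull parent q j * ((specnorm (A k))\<^sup>2 * trace P + trace (Q k))"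
    if P: "psd P" for k j and P :: "real^'n^'n"
  proof -
    have "trace (riccati (A k) (Q k) (?C g) (R k) P) \<le> c g" if "g \<notin> ?B" for g
      using trace_riccati_le_left_inverse[OF P R_pd L[OF that] a r b] that by (simp add: c_def)
    with trace_riccati_le[OF P R_pd] show ?thesis
      unfolding prob_r0_def
      by (intro weighted_sum_le_split pattern_prob_nonneg pattern_prob_le_1 q_prob c_nonneg)
  qed
  moreover have "0 \<le> (\<Sum>g\<in>UNIV. c g)" by (simp add: c_nonneg sum_nonneg)
  ultimately show ?thesis by blast
qed

theorem lemma2:
  fixes A :: "nat \<Rightarrow> real^'n^'n" and Q :: "nat \<Rightarrow> real^'n^'n"
    and R :: "nat \<Rightarrow> real^'p^'p" and sensor :: "'p \<Rightarrow> 'm::finite"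
    and Cfull :: "real^'n^'p" and parent :: "'m \<Rightarrow> 'm option"
    and p :: "'b::finite \<Rightarrow> 'b \<Rightarrow> real" and q :: "'m \<Rightarrow> 'b \<Rightarrow> real"
    and P0 :: "real^'n^'n"
  assumes tree: "acyclic (parent_rel parent)"
    and P0_psd: "psd P0"
    and Q_psd: "\<And>k. psd (Q k)"
    and R_pd: "\<And>k. pd (R k)"
    and R_blockdiag: "\<And>k a b. sensor a \<noteq> sensor b \<Longrightarrow> R k $ a $ b = 0"
    and A_bdd: "\<exists>c. \<forall>k. specnorm (A k) \<le> c"
    and Q_bdd: "\<exists>c. \<forall>k. specnorm (Q k) \<le> c"
    and R_bdd: "\<exists>c. \<forall>k. specnorm (R k) \<le> c"
    and p_nonneg: "\<And>i j. 0 \<le> p i j"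
    and p_stoch: "\<And>i. (\<Sum>j\<in>UNIV. p i j) = 1"
    and q_prob: "\<And>m j. 0 \<le> q m j \<and> q m j \<le> 1"
  shows "(\<forall>G k. 0 \<le> trace (Ptraj A Q R sensor Cfull parent P0 G k))
       \<and> (\<exists>W\<ge>0. \<forall>k P i. psd P \<longrightarrow>
            cond_exp_V A Q R sensor Cfull parent p q k P i
              \<le> W + (\<Sum>j\<in>UNIV. p i j * prob_r0 sensor Cfull parent q j)
                    * ((specnorm (A k))\<^sup>2 * trace P + trace (Q k)))"
proof
  show "\<forall>G k. 0 \<le> trace (Ptraj A Q R sensor Cfull parent P0 G k)"
  proof (intro allI)
    fix G k
    have "psd (Ptraj A Q R sensor Cfull parent P0 G k)"
      by (induction k) (simp_all add: P0_psd psd_riccati R_pd Q_psd)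
    then show "0 \<le> trace (Ptraj A Q R sensor Cfull parent P0 G k)" by (rule trace_psd_nonneg)
  qed
next
  obtain a b r where bounds: "\<And>k. specnorm (A k) \<le> a" "\<And>k. specnorm (Q k) \<le> b"
    "\<And>k. specnorm (R k) \<le> r"
    using A_bdd Q_bdd R_bdd by blast
  obtain W where "0 \<le> W" and W: "\<And>k P j. psd P \<Longrightarrow>
      (\<Sum>g\<in>UNIV. pattern_prob q j g * trace (riccati (A k) (Q k) (Cmat sensor Cfull parent g) (R k) P))
        \<le> W + prob_r0 sensor Cfull parent q j * ((specnorm (A k))\<^sup>2 * trace P + trace (Q k))"
    using pattern_average_trace_riccati_le[where A = A and Q = Q and R = R and q = q,
        OF R_pd q_prob bounds]
    by blast
  have "cond_exp_V A Q R sensor Cfull parent p q k P i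
      \<le> W + (\<Sum>j\<in>UNIV. p i j * prob_r0 sensor Cfull parent q j)
            * ((specnorm (A k))\<^sup>2 * trace P + trace (Q k))"
    if "psd P" for k i and P :: "real^'n^'n"
  proof -
    let ?X = "(specnorm (A k))\<^sup>2 * trace P + trace (Q k)"
    have "cond_exp_V A Q R sensor Cfull parent p q k P i
        \<le> (\<Sum>j\<in>UNIV. p i j * (W + prob_r0 sensor Cfull parent q j * ?X))"
      unfolding cond_exp_V_def by (intro sum_mono mult_left_mono W[OF that] p_nonneg)
    also have "\<dots> = (\<Sum>j\<in>UNIV. p i j) * W + (\<Sum>j\<in>UNIV. p i j * prob_r0 sensor Cfull parent q j) * ?X"
      by (simp add: distrib_left sum.distrib sum_distrib_right mult.assoc)
    finally show ?thesis by (simp add: p_stoch)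
  qed
  with \<open>0 \<le> W\<close> show "\<exists>W\<ge>0. \<forall>k P i. psd P \<longrightarrow> cond_exp_V A Q R sensor Cfull parent p q k P i
      \<le> W + (\<Sum>j\<in>UNIV. p i j * prob_r0 sensor Cfull parent q j)
            * ((specnorm (A k))\<^sup>2 * trace P + trace (Q k))"
    by blast
qed

end
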